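(* Let $\omega\colon\mathbf Z_+\to(0,+\infty)$ be a weight which is bounded from below, such that $\sum_{n\ge0}1/\omega(k2^n)<+\infty$ for every $k\ge3$, and such that $\mathcal T$ is bounded on $\mathcal X_\omega$. Then $\mathcal T$ is chaotic on $\mathcal X_\omega$, i.e. it is hypercyclic (has a vector with dense orbit) and its set of periodic points $\{f:\ \mathcal T^Nf=f\text{ for some }N\ge1\}$ is dense in $\mathcal X_\omega$. In particular this holds for $\omega=\omega_0$, $\omega_0(n)=(n+1)/\pi$.
   Context: $T\colon\mathbf Z_+\to\mathbf Z_+$ is the modified Collatz map: $T(n)=n/2$ for $n$ even, $T(n)=(3n+1)/2$ for $n$ odd. $\mathcal X_\omega$ is the Hilbert space of holomorphic functions $f(z)=\sum_{n\ge3}c_nz^n$ on the unit disk with $\|f\|_\omega^2=\sum_{n\ge3}|c_n|^2/\omega(n)<\infty$. $\mathcal T\sum_{n\ge3}c_nz^n=\sum_{j\ge3,\,T(j)\ge3}c_jz^{T(j)}$. $\mathcal T$ is bounded on $\mathcal X_\omega$ iff the sequences $\omega(6m)/\omega(3m)$, $\omega(6m+2)/\omega(3m+1)$, $(\omega(6m+4)+\omega(2m+1))/\omega(3m+2)$ ($m\ge1$) are bounded; this holds for $\omega_0$. *)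

theory Defs
  imports "HOL-Analysis.Analysis"
begin

definition collatzT :: "nat \<Rightarrow> nat" where
  "collatzT n = (if even n then n div 2 else (3 * n + 1) div 2)"

text \<open>The space X_omega, represented through Taylor coefficients:
  f(z) = sum_{n>=3} c_n z^n corresponds to the sequence c with c_n = 0 for n < 3.\<close>
definition Xw :: "(nat \<Rightarrow> real) \<Rightarrow> (nat \<Rightarrow> complex) set" where
  "Xw \<omega> = {c. (\<forall>n<3. c n = 0) \<and> summable (\<lambda>n. (cmod (c n))\<^sup>2 / \<omega> n)}"

definition wnorm :: "(nat \<Rightarrow> real) \<Rightarrow> (nat \<Rightarrow> complex) \<Rightarrow> real" where
  "wnorm \<omega> c = sqrt (\<Sum>n. (cmod (c n))\<^sup>2 / \<omega> n)"

definition Top :: "(nat \<Rightarrow> complex) \<Rightarrow> (nat \<Rightarrow> complex)" where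
  "Top c = (\<lambda>m. if m \<ge> 3 then (\<Sum>j\<in>{j. 3 \<le> j \<and> collatzT j = m}. c j) else 0)"

definition Top_bounded :: "(nat \<Rightarrow> real) \<Rightarrow> bool" where
  "Top_bounded \<omega> \<longleftrightarrow> (\<exists>C. \<forall>c\<in>Xw \<omega>. Top c \<in> Xw \<omega> \<and> wnorm \<omega> (Top c) \<le> C * wnorm \<omega> c)"

definition hypercyclic :: "(nat \<Rightarrow> real) \<Rightarrow> bool" where
  "hypercyclic \<omega> \<longleftrightarrow> (\<exists>f\<in>Xw \<omega>. \<forall>g\<in>Xw \<omega>. \<forall>e>0. \<exists>n. wnorm \<omega> ((Top ^^ n) f - g) < e)"

definition periodic_points_dense :: "(nat \<Rightarrow> real) \<Rightarrow> bool" where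
  "periodic_points_dense \<omega> \<longleftrightarrow>
     (\<forall>g\<in>Xw \<omega>. \<forall>e>0. \<exists>f\<in>Xw \<omega>. (\<exists>N\<ge>1. (Top ^^ N) f = f) \<and> wnorm \<omega> (f - g) < e)"

definition chaotic :: "(nat \<Rightarrow> real) \<Rightarrow> bool" where
  "chaotic \<omega> \<longleftrightarrow> hypercyclic \<omega> \<and> periodic_points_dense \<omega>"

definition omega0 :: "nat \<Rightarrow> real" where
  "omega0 n = (real n + 1) / pi"

end

theory Submission
  imports Defs
begin

text \<open>The operator \<open>S\<close>, \<open>S f(z) = f(z\<^sup>2)\<close>, is a right inverse of \<open>T\<close>, and because
  \<open>\<Sum>\<^sub>n 1/\<omega>(k 2\<^sup>n) < \<infinity>\<close> its powers tend to \<open>0\<close> on finitely supported sequences.  The finitely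
  supported sequences annihilated by a power of \<open>T\<close> are dense: if the \<open>T\<close>-orbit of \<open>a\<close> stays
  \<open>\<ge> 3\<close>, then \<open>e\<^sub>a - e\<^sub>b\<close> is annihilated for every \<open>b = 2\<^sup>n T\<^sup>n(a)\<close>, and averaging over many such
  \<open>b\<close> makes the remainder small because \<open>\<omega>\<close> is bounded below.  This is the setting of the
  Godefroy--Shapiro/Kitai criterion: \<open>\<Sum>\<^sub>k S\<^bsup>n\<^sub>k\<^esup> x\<^sub>k\<close> is hypercyclic for a dense sequence \<open>x\<^sub>k\<close> and
  rapidly increasing \<open>n\<^sub>k\<close>, and \<open>\<Sum>\<^sub>j S\<^bsup>jN\<^esup> y\<close> is an \<open>N\<close>-periodic point close to \<open>y\<close> whenever
  \<open>T\<^sup>N y = 0\<close>.\<close>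

section \<open>The operator \<open>T\<close> and its right inverse\<close>

definition vanishes_below_3 :: "(nat \<Rightarrow> complex) \<Rightarrow> bool" where
  "vanishes_below_3 c \<longleftrightarrow> (\<forall>n<3. c n = 0)"

definition finite_support :: "(nat \<Rightarrow> complex) \<Rightarrow> bool" where
  "finite_support c \<longleftrightarrow> vanishes_below_3 c \<and> (\<exists>M. \<forall>m\<ge>M. c m = 0)"

definition unit_seq :: "nat \<Rightarrow> nat \<Rightarrow> complex" where
  "unit_seq a = (\<lambda>m. if m = a then 1 else 0)"

text \<open>The operator \<open>S\<close>: on Taylor coefficients, the composition operator \<open>f(z) \<mapsto> f(z\<^sup>2)\<close>.\<close>
definition Top_rinv :: "(nat \<Rightarrow> complex) \<Rightarrow> nat \<Rightarrow> complex" where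
  "Top_rinv c = (\<lambda>m. if even m then c (m div 2) else 0)"

lemma finite_collatzT_fibre: "finite {j. 3 \<le> j \<and> collatzT j = m}"
proof (rule finite_subset)
  show "{j. 3 \<le> j \<and> collatzT j = m} \<subseteq> {..2 * m + 1}"
    unfolding collatzT_def by auto
qed simp

lemma Top_add: "Top (\<lambda>m. a m + b m) = (\<lambda>m. Top a m + Top b m)"
  unfolding Top_def by (auto simp: sum.distrib)

lemma Top_diff: "Top (a - b) = Top a - Top b"
  unfolding Top_def by (auto simp: sum_subtractf)

lemma Top_scale: "Top (\<lambda>m. k * a m) = (\<lambda>m. k * Top a m)"
  unfolding Top_def by (auto simp: sum_distrib_left)

lemma Top_zero: "Top (\<lambda>m. 0) = (\<lambda>m. 0)"
  unfolding Top_def by auto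

lemma Top_pow_add: "(Top ^^ n) (\<lambda>m. a m + b m) = (\<lambda>m. (Top ^^ n) a m + (Top ^^ n) b m)"
  by (induction n) (simp_all add: Top_add)

lemma Top_pow_diff: "(Top ^^ n) (a - b) = (Top ^^ n) a - (Top ^^ n) b"
  unfolding fun_diff_def by (induction n) (simp_all add: Top_diff[unfolded fun_diff_def])

lemma Top_pow_scale: "(Top ^^ n) (\<lambda>m. k * a m) = (\<lambda>m. k * (Top ^^ n) a m)"
  by (induction n) (simp_all add: Top_scale)

lemma Top_pow_zero: "(Top ^^ n) (\<lambda>m. 0) = (\<lambda>m. 0)"
  by (induction n) (simp_all add: Top_zero)

lemma Top_pow_eq_0_mono:
  assumes "(Top ^^ n) x = (\<lambda>m. 0)" and "n \<le> n'"
  shows "(Top ^^ n') x = (\<lambda>m. 0)"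
proof -
  obtain d where "n' = d + n"
    using \<open>n \<le> n'\<close> le_iff_add by (metis add.commute)
  then show ?thesis
    using assms(1) by (simp add: funpow_add Top_pow_zero)
qed

lemma summable_Top:
  assumes "\<And>m. summable (\<lambda>k. u k m)"
  shows "summable (\<lambda>k. Top (u k) m)"
  by (cases "3 \<le> m") (auto simp: Top_def intro!: summable_sum assms)

lemma Top_suminf:
  assumes "\<And>m. summable (\<lambda>k. u k m)"
  shows "Top (\<lambda>m. \<Sum>k. u k m) = (\<lambda>m. \<Sum>k. Top (u k) m)"
  unfolding Top_def using assms by (auto simp: suminf_sum fun_eq_iff)

lemma Top_pow_suminf:
  assumes "\<And>m. summable (\<lambda>k. u k m)"
  shows "(Top ^^ n) (\<lambda>m. \<Sum>k. u k m) = (\<lambda>m. \<Sum>k. (Top ^^ n) (u k) m)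
    \<and> (\<forall>m. summable (\<lambda>k. (Top ^^ n) (u k) m))"
proof (induction n)
  case (Suc n)
  then show ?case
    using Top_suminf[of "\<lambda>k. (Top ^^ n) (u k)"] summable_Top[of "\<lambda>k. (Top ^^ n) (u k)"]
    by simp
qed (simp add: assms)

lemma vanishes_below_3_Top_rinv_pow:
  "vanishes_below_3 c \<Longrightarrow> vanishes_below_3 ((Top_rinv ^^ n) c)"
  by (induction n) (auto simp: vanishes_below_3_def Top_rinv_def)

lemma Top_Top_rinv:
  assumes "vanishes_below_3 c"
  shows "Top (Top_rinv c) = c"
proof
  fix m
  show "Top (Top_rinv c) m = c m"
  proof (cases "3 \<le> m")
    case True
    let ?J = "{j. 3 \<le> j \<and> collatzT j = m}"
    have "2 * m \<in> ?J"
      using True unfolding collatzT_def by auto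
    moreover have "Top_rinv c j = 0" if "j \<in> ?J - {2 * m}" for j
      using that unfolding collatzT_def Top_rinv_def by (auto split: if_splits)
    ultimately have "(\<Sum>j\<in>?J. Top_rinv c j) = Top_rinv c (2 * m)"
      using finite_collatzT_fibre by (subst sum.remove) auto
    then show ?thesis
      using True unfolding Top_def Top_rinv_def by simp
  qed (use assms in \<open>auto simp: Top_def vanishes_below_3_def\<close>)
qed

lemma Top_pow_Top_rinv_pow:
  "vanishes_below_3 c \<Longrightarrow> (Top ^^ n) ((Top_rinv ^^ n) c) = c"
proof (induction n)
  case (Suc n)
  have "(Top_rinv ^^ n) (Top_rinv c) = Top_rinv ((Top_rinv ^^ n) c)"
    by (simp add: funpow_swap1)
  with Suc show ?case
    by (simp add: funpow_Suc_right Top_Top_rinv vanishes_below_3_Top_rinv_pow del: funpow.simps)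
qed simp

lemma Top_pow_Top_rinv_pow_ge:
  assumes "vanishes_below_3 c" and "n \<le> m"
  shows "(Top ^^ n) ((Top_rinv ^^ m) c) = (Top_rinv ^^ (m - n)) c"
proof -
  have "(Top_rinv ^^ m) c = (Top_rinv ^^ n) ((Top_rinv ^^ (m - n)) c)"
    using \<open>n \<le> m\<close> by (metis funpow_add le_add_diff_inverse o_apply)
  then show ?thesis
    using assms(1) by (simp add: Top_pow_Top_rinv_pow vanishes_below_3_Top_rinv_pow)
qed

lemma Top_pow_Top_rinv_pow_le:
  assumes "vanishes_below_3 c" and "m \<le> n"
  shows "(Top ^^ n) ((Top_rinv ^^ m) c) = (Top ^^ (n - m)) c"
proof -
  have "Top ^^ n = (Top ^^ (n - m)) \<circ> (Top ^^ m)"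
    using \<open>m \<le> n\<close> by (metis funpow_add le_add_diff_inverse2)
  then show ?thesis
    using assms(1) by (simp add: Top_pow_Top_rinv_pow)
qed

lemma Top_rinv_pow_apply:
  "(Top_rinv ^^ n) c j = (if 2 ^ n dvd j then c (j div 2 ^ n) else 0)"
proof (induction n arbitrary: j)
  case (Suc n)
  have "(Top_rinv ^^ Suc n) c j = (if even j then (Top_rinv ^^ n) c (j div 2) else 0)"
    by (simp only: funpow.simps o_apply Top_rinv_def[of "(Top_rinv ^^ n) c"])
  moreover have "even j \<and> 2 ^ n dvd j div 2 \<longleftrightarrow> 2 ^ Suc n dvd j"
    by (auto elim!: evenE simp: mult_dvd_mono)
  ultimately show ?case
    using Suc by (auto simp: div_mult2_eq)
qed simp

lemma Top_rinv_pow_unit_seq: "(Top_rinv ^^ n) (unit_seq a) = unit_seq (2 ^ n * a)"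
  by (auto simp: fun_eq_iff Top_rinv_pow_apply unit_seq_def)

lemma Top_unit_seq:
  assumes "3 \<le> a"
  shows "Top (unit_seq a) = (if 3 \<le> collatzT a then unit_seq (collatzT a) else (\<lambda>m. 0))"
proof
  fix m
  have "(\<Sum>j\<in>{j. 3 \<le> j \<and> collatzT j = m}. unit_seq a j) = (if collatzT a = m then 1 else 0)"
    using finite_collatzT_fibre[of m] assms unfolding unit_seq_def by (simp add: sum.delta')
  then show "Top (unit_seq a) m = (if 3 \<le> collatzT a then unit_seq (collatzT a) else (\<lambda>m. 0)) m"
    unfolding Top_def by (auto simp: unit_seq_def)
qed

lemma Top_pow_unit_seq:
  assumes "3 \<le> a"
  shows "(Top ^^ n) (unit_seq a) = (\<lambda>m. 0)
    \<or> (Top ^^ n) (unit_seq a) = unit_seq ((collatzT ^^ n) a) \<and> 3 \<le> (collatzT ^^ n) a"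
proof (induction n)
  case (Suc n)
  then show ?case
    by (auto simp: Top_zero Top_unit_seq)
qed (simp add: assms)

text \<open>The orbit of \<open>\<Sum>\<^sub>k S\<^bsup>n\<^sub>k\<^esup> x\<^sub>k\<close> at time \<open>n\<^sub>K\<close>: earlier terms are annihilated,
  term \<open>K\<close> is restored, and later terms survive as a tail.\<close>
lemma Top_pow_suminf_Top_rinv_pow:
  assumes vanishes: "\<And>k. vanishes_below_3 (x k)"
    and killed: "\<And>k. (Top ^^ N k) (x k) = (\<lambda>m. 0)"
    and gap: "\<And>k K. k < K \<Longrightarrow> n k + N k \<le> n K"
    and summable: "\<And>m. summable (\<lambda>k. (Top_rinv ^^ n k) (x k) m)"
  shows "(Top ^^ n K) (\<lambda>m. \<Sum>k. (Top_rinv ^^ n k) (x k) m)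
    = (\<lambda>m. x K m + (\<Sum>j. (Top_rinv ^^ (n (j + Suc K) - n K)) (x (j + Suc K)) m))"
proof
  fix m
  define f where "f k = (Top ^^ n K) ((Top_rinv ^^ n k) (x k)) m" for k
  have f_before: "f k = 0" if "k < K" for k
  proof -
    have "(Top ^^ (n K - n k)) (x k) = (\<lambda>m. 0)"
      using Top_pow_eq_0_mono[OF killed] gap[OF that] by simp
    then show ?thesis
      using gap[OF that] by (simp add: f_def Top_pow_Top_rinv_pow_le[OF vanishes])
  qed
  have f_after: "f k = (Top_rinv ^^ (n k - n K)) (x k) m" if "K < k" for k
    using gap[OF that] by (simp add: f_def Top_pow_Top_rinv_pow_ge[OF vanishes])
  note orbit = Top_pow_suminf[where u = "\<lambda>k. (Top_rinv ^^ n k) (x k)" and n = "n K", OF summable]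
  have "summable f"
    using orbit by (simp add: f_def[abs_def])
  then have "(\<Sum>k. f k) = (\<Sum>j. f (j + Suc K)) + (\<Sum>k<Suc K. f k)"
    by (rule suminf_split_initial_segment)
  also have "(\<Sum>k<Suc K. f k) = x K m"
    using f_before by (simp add: f_def Top_pow_Top_rinv_pow[OF vanishes])
  finally show "(Top ^^ n K) (\<lambda>m. \<Sum>k. (Top_rinv ^^ n k) (x k) m) m
      = x K m + (\<Sum>j. (Top_rinv ^^ (n (j + Suc K) - n K)) (x (j + Suc K)) m)"
    using orbit f_after by (simp add: f_def)
qed

lemma Top_pow_eq_if_Top_rinv_pow:
  assumes "(Top ^^ N) y = (\<lambda>m. 0)" and "vanishes_below_3 f"
    and "f = (\<lambda>m. y m + (Top_rinv ^^ N) f m)"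
  shows "(Top ^^ N) f = f"
proof -
  have "(Top ^^ N) f = (\<lambda>m. (Top ^^ N) y m + (Top ^^ N) ((Top_rinv ^^ N) f) m)"
    by (subst assms(3)) (rule Top_pow_add)
  then show ?thesis
    using assms(1,2) by (simp add: Top_pow_Top_rinv_pow)
qed

definition lacunary :: "nat \<Rightarrow> nat \<Rightarrow> nat \<Rightarrow> complex" where
  "lacunary a N = (\<lambda>m. if \<exists>n. m = a * 2 ^ (Suc n * N) then 1 else 0)"

lemma unit_seq_plus_lacunary:
  assumes "1 \<le> a" and "1 \<le> N"
  shows "unit_seq a i + lacunary a N i = (if \<exists>n. i = a * 2 ^ (n * N) then 1 else 0)"
proof -
  have "a < a * 2 ^ (Suc n * N)" for n
  proof -
    have "1 < (2 :: nat) ^ (Suc n * N)"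
      using assms(2) by (intro one_less_power) auto
    then show ?thesis
      using assms(1) by simp
  qed
  then have lacunary_a: "lacunary a N a = 0"
    unfolding lacunary_def by (metis less_irrefl)
  have iff: "(\<exists>n. i = a * 2 ^ (n * N)) \<longleftrightarrow> i = a \<or> (\<exists>n. i = a * 2 ^ (Suc n * N))"
  proof
    assume "\<exists>n. i = a * 2 ^ (n * N)"
    then obtain n where "i = a * 2 ^ (n * N)" ..
    then show "i = a \<or> (\<exists>n. i = a * 2 ^ (Suc n * N))"
      by (cases n) auto
  next
    assume "i = a \<or> (\<exists>n. i = a * 2 ^ (Suc n * N))"
    then show "\<exists>n. i = a * 2 ^ (n * N)"
      by (metis mult_0 mult.right_neutral power_0)
  qed
  show ?thesis
  proof (cases "i = a")
    case True
    then show ?thesis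
      using iff lacunary_a by (simp add: unit_seq_def)
  next
    case False
    then show ?thesis
      using iff by (simp add: unit_seq_def lacunary_def)
  qed
qed

lemma Top_rinv_pow_apply_lacunary:
  assumes "1 \<le> a" and "1 \<le> N"
  shows "(if 2 ^ N dvd j then unit_seq a (j div 2 ^ N) + lacunary a N (j div 2 ^ N) else 0)
    = lacunary a N j"
proof -
  have Suc_pow: "a * 2 ^ (Suc n * N) = 2 ^ N * (a * 2 ^ (n * N))" for n
    by (simp add: power_add mult.commute mult.left_commute)
  have iff: "(2 ^ N dvd j \<and> (\<exists>n. j div 2 ^ N = a * 2 ^ (n * N))) \<longleftrightarrow> (\<exists>n. j = a * 2 ^ (Suc n * N))"
    unfolding Suc_pow by (metis dvd_mult_div_cancel dvd_triv_left nonzero_mult_div_cancel_left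
        power_not_zero zero_neq_numeral)
  have "(if 2 ^ N dvd j then unit_seq a (j div 2 ^ N) + lacunary a N (j div 2 ^ N) else 0)
      = (if 2 ^ N dvd j \<and> (\<exists>n. j div 2 ^ N = a * 2 ^ (n * N)) then 1 else 0)"
    using unit_seq_plus_lacunary[OF assms, of "j div 2 ^ N"] by simp
  also have "\<dots> = lacunary a N j"
    unfolding iff lacunary_def ..
  finally show ?thesis .
qed

lemma Top_rinv_pow_lincomb_lacunary:
  assumes "\<And>a. a \<in> A \<Longrightarrow> 1 \<le> a" and "1 \<le> N"
  shows "(Top_rinv ^^ N) (\<lambda>m. \<Sum>a\<in>A. k a * (unit_seq a m + lacunary a N m))
    = (\<lambda>m. \<Sum>a\<in>A. k a * lacunary a N m)"
proof
  fix j
  have "(Top_rinv ^^ N) (\<lambda>m. \<Sum>a\<in>A. k a * (unit_seq a m + lacunary a N m)) j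
      = (\<Sum>a\<in>A. k a * (if 2 ^ N dvd j then unit_seq a (j div 2 ^ N) + lacunary a N (j div 2 ^ N) else 0))"
    by (simp add: Top_rinv_pow_apply)
  also have "\<dots> = (\<Sum>a\<in>A. k a * lacunary a N j)"
    using assms by (simp add: Top_rinv_pow_apply_lacunary)
  finally show "(Top_rinv ^^ N) (\<lambda>m. \<Sum>a\<in>A. k a * (unit_seq a m + lacunary a N m)) j
      = (\<Sum>a\<in>A. k a * lacunary a N j)" .
qed

section \<open>Weighted \<open>\<ell>\<^sup>2\<close> estimates\<close>

lemma sqrt_suminf_le_of_partial_sums:
  fixes h :: "nat \<Rightarrow> real"
  assumes "\<And>N. sqrt (\<Sum>n<N. (h n)\<^sup>2) \<le> B"
  shows "summable (\<lambda>n. (h n)\<^sup>2) \<and> sqrt (\<Sum>n. (h n)\<^sup>2) \<le> B"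
proof -
  have "0 \<le> B"
    using assms[of 0] by simp
  have partial: "(\<Sum>n<N. (h n)\<^sup>2) \<le> B\<^sup>2" for N
    using assms[of N] by (rule sqrt_le_D)
  have summable: "summable (\<lambda>n. (h n)\<^sup>2)"
    by (rule summableI_nonneg_bounded[OF _ partial]) simp
  then have "(\<Sum>n. (h n)\<^sup>2) \<le> B\<^sup>2"
    by (rule suminf_le_const[OF _ partial])
  then show ?thesis
    using summable \<open>0 \<le> B\<close> by (simp add: real_le_lsqrt)
qed

lemma suminf_tail_tendsto_0:
  fixes f :: "nat \<Rightarrow> 'a::real_normed_vector"
  assumes "summable f"
  shows "(\<lambda>N. \<Sum>j. f (j + N)) \<longlonglongrightarrow> 0"
proof -
  have "(\<lambda>N. suminf f - (\<Sum>j<N. f j)) \<longlonglongrightarrow> suminf f - suminf f"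
    using summable_LIMSEQ[OF assms] by (intro tendsto_intros)
  moreover have "(\<Sum>j. f (j + N)) = suminf f - (\<Sum>j<N. f j)" for N
    using suminf_split_initial_segment[OF assms, of N] by simp
  ultimately show ?thesis
    by simp
qed

lemma wnorm_commute: "wnorm \<omega> (a - b) = wnorm \<omega> (b - a)"
  unfolding wnorm_def by (simp add: norm_minus_commute)

lemma Xw_finite_support:
  assumes "vanishes_below_3 c" and "finite A" and "\<And>m. m \<notin> A \<Longrightarrow> c m = 0"
  shows "c \<in> Xw \<omega> \<and> wnorm \<omega> c = sqrt (\<Sum>m\<in>A. (cmod (c m))\<^sup>2 / \<omega> m)"
proof -
  have "(\<lambda>m. (cmod (c m))\<^sup>2 / \<omega> m) sums (\<Sum>m\<in>A. (cmod (c m))\<^sup>2 / \<omega> m)"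
    by (rule sums_finite) (auto simp: assms)
  then show ?thesis
    using assms(1) unfolding Xw_def wnorm_def vanishes_below_3_def by (auto simp: sums_iff)
qed

lemma finite_support_Xw: "finite_support c \<Longrightarrow> c \<in> Xw \<omega>"
  unfolding finite_support_def
  by (metis Xw_finite_support finite_lessThan lessThan_iff not_le)

lemma unit_seq_Xw: "3 \<le> a \<Longrightarrow> unit_seq a \<in> Xw \<omega>"
  by (rule finite_support_Xw)
    (auto simp: finite_support_def vanishes_below_3_def unit_seq_def intro!: exI[of _ "Suc a"])

lemma Xw_strict_mono_support:
  assumes "vanishes_below_3 c" and "strict_mono h" and "\<And>m. m \<notin> range h \<Longrightarrow> c m = 0"
    and "(\<lambda>j. (cmod (c (h j)))\<^sup>2 / \<omega> (h j)) sums s"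
  shows "c \<in> Xw \<omega> \<and> wnorm \<omega> c = sqrt s"
proof -
  have "(\<lambda>j. (cmod (c (h j)))\<^sup>2 / \<omega> (h j)) sums s \<longleftrightarrow> (\<lambda>m. (cmod (c m))\<^sup>2 / \<omega> m) sums s"
    by (rule sums_mono_reindex[OF assms(2)]) (simp add: assms(3))
  with assms(4) have "(\<lambda>m. (cmod (c m))\<^sup>2 / \<omega> m) sums s"
    by simp
  then show ?thesis
    using assms(1) unfolding Xw_def wnorm_def vanishes_below_3_def by (auto simp: sums_iff)
qed

lemma eq_sum_unit_seq:
  assumes "vanishes_below_3 c" and "\<And>m. M \<le> m \<Longrightarrow> c m = 0"
  shows "c = (\<lambda>m. \<Sum>a\<in>{3..<M}. c a * unit_seq a m)"
proof
  fix m
  have "(\<Sum>a\<in>{3..<M}. c a * unit_seq a m) = (if m \<in> {3..<M} then c m else 0)"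
    unfolding unit_seq_def by (simp add: sum.delta' if_distrib[where f = "\<lambda>x. _ * x"] cong: if_cong)
  then show "c m = (\<Sum>a\<in>{3..<M}. c a * unit_seq a m)"
    using assms unfolding vanishes_below_3_def by auto
qed

lemma wnorm_Top_rinv_pow:
  assumes "vanishes_below_3 x" and "\<And>m. M \<le> m \<Longrightarrow> x m = 0"
  shows "(Top_rinv ^^ n) x \<in> Xw \<omega>
    \<and> wnorm \<omega> ((Top_rinv ^^ n) x) = sqrt (\<Sum>a<M. (cmod (x a))\<^sup>2 / \<omega> (a * 2 ^ n))"
proof -
  let ?A = "(\<lambda>a. a * 2 ^ n) ` {..<M}"
  have "(Top_rinv ^^ n) x j = 0" if "j \<notin> ?A" for j
  proof (cases "2 ^ n dvd j")
    case True
    then have "j = (j div 2 ^ n) * 2 ^ n"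
      by simp
    then have "M \<le> j div 2 ^ n"
      using that by (metis image_eqI lessThan_iff not_le)
    then show ?thesis
      using True assms(2) by (simp add: Top_rinv_pow_apply)
  qed (simp add: Top_rinv_pow_apply)
  then have "(Top_rinv ^^ n) x \<in> Xw \<omega>
      \<and> wnorm \<omega> ((Top_rinv ^^ n) x) = sqrt (\<Sum>j\<in>?A. (cmod ((Top_rinv ^^ n) x j))\<^sup>2 / \<omega> j)"
    using assms(1) by (intro Xw_finite_support vanishes_below_3_Top_rinv_pow) auto
  also have "(\<Sum>j\<in>?A. (cmod ((Top_rinv ^^ n) x j))\<^sup>2 / \<omega> j) = (\<Sum>a<M. (cmod (x a))\<^sup>2 / \<omega> (a * 2 ^ n))"
    by (subst sum.reindex) (auto simp: inj_on_def Top_rinv_pow_apply)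
  finally show ?thesis .
qed

locale pos_weight =
  fixes \<omega> :: "nat \<Rightarrow> real"
  assumes weight_pos: "\<And>n. 1 \<le> n \<Longrightarrow> 0 < \<omega> n"

begin

text \<open>Moduli of the coordinates of the isometry \<open>c \<mapsto> (c\<^sub>n / \<surd>\<omega>(n))\<^sub>n\<close> of \<open>X\<^sub>\<omega>\<close> onto \<open>\<ell>\<^sup>2\<close>;
  index 0 is excluded because \<open>\<omega> 0\<close> is unconstrained.\<close>
definition wcoord :: "(nat \<Rightarrow> complex) \<Rightarrow> nat \<Rightarrow> real" where
  "wcoord c n = (if n = 0 then 0 else cmod (c n) / sqrt (\<omega> n))"

lemma wcoord_nonneg: "0 \<le> wcoord c n"
  unfolding wcoord_def using weight_pos[of n] by (cases "n = 0") auto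

lemma wcoord_square:
  "vanishes_below_3 c \<Longrightarrow> (cmod (c n))\<^sup>2 / \<omega> n = (wcoord c n)\<^sup>2"
  using weight_pos[of n] unfolding wcoord_def vanishes_below_3_def
  by (cases "n = 0") (auto simp: power_divide)

lemma Xw_iff: "c \<in> Xw \<omega> \<longleftrightarrow> vanishes_below_3 c \<and> summable (\<lambda>n. (wcoord c n)\<^sup>2)"
  unfolding Xw_def vanishes_below_3_def[symmetric] by (auto simp: wcoord_square)

lemma wnorm_wcoord: "vanishes_below_3 c \<Longrightarrow> wnorm \<omega> c = sqrt (\<Sum>n. (wcoord c n)\<^sup>2)"
  unfolding wnorm_def by (simp add: wcoord_square)

lemma vanishes_below_3_if_Xw: "c \<in> Xw \<omega> \<Longrightarrow> vanishes_below_3 c"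
  by (simp add: Xw_iff)

lemma wnorm_nonneg: "c \<in> Xw \<omega> \<Longrightarrow> 0 \<le> wnorm \<omega> c"
  by (auto simp: wnorm_wcoord Xw_iff intro!: suminf_nonneg)

lemma sqrt_partial_sum_le_wnorm:
  assumes "c \<in> Xw \<omega>"
  shows "sqrt (\<Sum>n<N. (wcoord c n)\<^sup>2) \<le> wnorm \<omega> c"
proof -
  have "(\<Sum>n<N. (wcoord c n)\<^sup>2) \<le> (\<Sum>n. (wcoord c n)\<^sup>2)"
    using assms by (intro sum_le_suminf) (auto simp: Xw_iff)
  then show ?thesis
    using assms by (simp add: wnorm_wcoord Xw_iff)
qed

lemma norm_le_wnorm:
  assumes "c \<in> Xw \<omega>" and "1 \<le> m"
  shows "cmod (c m) \<le> sqrt (\<omega> m) * wnorm \<omega> c"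
proof -
  have "(wcoord c m)\<^sup>2 \<le> (\<Sum>n<Suc m. (wcoord c n)\<^sup>2)"
    by (rule member_le_sum) auto
  then have "wcoord c m \<le> sqrt (\<Sum>n<Suc m. (wcoord c n)\<^sup>2)"
    using wcoord_nonneg by (simp add: real_le_rsqrt)
  also have "\<dots> \<le> wnorm \<omega> c"
    by (rule sqrt_partial_sum_le_wnorm[OF assms(1)])
  finally show ?thesis
    using assms(2) weight_pos[of m] by (simp add: wcoord_def divide_le_eq mult.commute)
qed

lemma Xw_dominated_add:
  assumes "a \<in> Xw \<omega>" "b \<in> Xw \<omega>" "vanishes_below_3 h"
    and "\<And>n. cmod (h n) \<le> cmod (a n) + cmod (b n)"
  shows "h \<in> Xw \<omega> \<and> wnorm \<omega> h \<le> wnorm \<omega> a + wnorm \<omega> b"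
proof -
  have dominated: "wcoord h n \<le> wcoord a n + wcoord b n" for n
    using assms(4)[of n] weight_pos[of n] unfolding wcoord_def
    by (cases "n = 0") (auto simp: add_divide_distrib[symmetric] intro!: divide_right_mono)
  have "sqrt (\<Sum>n<N. (wcoord h n)\<^sup>2) \<le> wnorm \<omega> a + wnorm \<omega> b" for N
  proof -
    have "sqrt (\<Sum>n<N. (wcoord h n)\<^sup>2) = L2_set (wcoord h) {..<N}"
      by (simp add: L2_set_def)
    also have "\<dots> \<le> L2_set (\<lambda>n. wcoord a n + wcoord b n) {..<N}"
      by (rule L2_set_mono) (auto simp: dominated wcoord_nonneg)
    also have "\<dots> \<le> L2_set (wcoord a) {..<N} + L2_set (wcoord b) {..<N}"
      by (rule L2_set_triangle_ineq)
    also have "\<dots> \<le> wnorm \<omega> a + wnorm \<omega> b"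
      using sqrt_partial_sum_le_wnorm[OF assms(1), of N] sqrt_partial_sum_le_wnorm[OF assms(2), of N]
      by (simp add: L2_set_def)
    finally show ?thesis .
  qed
  from sqrt_suminf_le_of_partial_sums[OF this] assms(3) show ?thesis
    by (simp add: Xw_iff wnorm_wcoord)
qed

lemma Xw_dominated_scale:
  assumes "a \<in> Xw \<omega>" "vanishes_below_3 h" "0 \<le> K" "\<And>n. cmod (h n) \<le> K * cmod (a n)"
  shows "h \<in> Xw \<omega> \<and> wnorm \<omega> h \<le> K * wnorm \<omega> a"
proof -
  have dominated: "wcoord h n \<le> K * wcoord a n" for n
    using assms(4)[of n] weight_pos[of n] unfolding wcoord_def
    by (cases "n = 0") (auto intro!: divide_right_mono)
  have "sqrt (\<Sum>n<N. (wcoord h n)\<^sup>2) \<le> K * wnorm \<omega> a" for N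
  proof -
    have "sqrt (\<Sum>n<N. (wcoord h n)\<^sup>2) = L2_set (wcoord h) {..<N}"
      by (simp add: L2_set_def)
    also have "\<dots> \<le> L2_set (\<lambda>n. K * wcoord a n) {..<N}"
      by (rule L2_set_mono) (auto simp: dominated wcoord_nonneg)
    also have "\<dots> = K * L2_set (wcoord a) {..<N}"
      using assms(3) by (simp add: L2_set_right_distrib)
    also have "\<dots> \<le> K * wnorm \<omega> a"
      using sqrt_partial_sum_le_wnorm[OF assms(1), of N] assms(3)
      by (simp add: L2_set_def mult_left_mono)
    finally show ?thesis .
  qed
  from sqrt_suminf_le_of_partial_sums[OF this] assms(2) show ?thesis
    by (simp add: Xw_iff wnorm_wcoord)
qed

lemma Xw_add:
  "a \<in> Xw \<omega> \<Longrightarrow> b \<in> Xw \<omega>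
    \<Longrightarrow> (\<lambda>m. a m + b m) \<in> Xw \<omega> \<and> wnorm \<omega> (\<lambda>m. a m + b m) \<le> wnorm \<omega> a + wnorm \<omega> b"
  by (rule Xw_dominated_add) (auto simp: vanishes_below_3_def Xw_iff norm_triangle_ineq)

lemma Xw_diff: "a \<in> Xw \<omega> \<Longrightarrow> b \<in> Xw \<omega> \<Longrightarrow> a - b \<in> Xw \<omega>"
  using Xw_dominated_add[of a b "a - b"]
  by (auto simp: vanishes_below_3_def Xw_iff norm_triangle_ineq4)

lemma wnorm_diff_triangle:
  assumes "a \<in> Xw \<omega>" "b \<in> Xw \<omega>" "c \<in> Xw \<omega>"
  shows "wnorm \<omega> (a - c) \<le> wnorm \<omega> (a - b) + wnorm \<omega> (b - c)"
  using assms Xw_diff[of a b] Xw_diff[of b c]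
  by (intro conjunct2[OF Xw_dominated_add])
    (auto simp: vanishes_below_3_def Xw_iff intro: order_trans[OF _ norm_triangle_ineq])

lemma Xw_scale:
  "a \<in> Xw \<omega> \<Longrightarrow> (\<lambda>m. k * a m) \<in> Xw \<omega> \<and> wnorm \<omega> (\<lambda>m. k * a m) \<le> cmod k * wnorm \<omega> a"
  by (rule Xw_dominated_scale) (auto simp: vanishes_below_3_def Xw_iff norm_mult)

lemma Xw_sum:
  assumes "\<And>i. i \<in> F \<Longrightarrow> u i \<in> Xw \<omega>"
  shows "(\<lambda>m. \<Sum>i\<in>F. u i m) \<in> Xw \<omega>
    \<and> wnorm \<omega> (\<lambda>m. \<Sum>i\<in>F. u i m) \<le> (\<Sum>i\<in>F. wnorm \<omega> (u i))"
  using assms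
proof (induction F rule: infinite_finite_induct)
  case (insert i F)
  then show ?case
    using Xw_add[of "u i" "\<lambda>m. \<Sum>i\<in>F. u i m"] by auto
qed (simp_all add: Xw_def wnorm_def)

lemma Xw_lincomb:
  assumes "\<And>a. a \<in> A \<Longrightarrow> v a \<in> Xw \<omega>"
  shows "(\<lambda>m. \<Sum>a\<in>A. k a * v a m) \<in> Xw \<omega>
    \<and> wnorm \<omega> (\<lambda>m. \<Sum>a\<in>A. k a * v a m) \<le> (\<Sum>a\<in>A. cmod (k a) * wnorm \<omega> (v a))"
proof -
  have scaled: "(\<lambda>m. k a * v a m) \<in> Xw \<omega> \<and> wnorm \<omega> (\<lambda>m. k a * v a m) \<le> cmod (k a) * wnorm \<omega> (v a)"
    if "a \<in> A" for a
    using Xw_scale[OF assms[OF that]] .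
  have "(\<lambda>m. \<Sum>a\<in>A. k a * v a m) \<in> Xw \<omega>
      \<and> wnorm \<omega> (\<lambda>m. \<Sum>a\<in>A. k a * v a m) \<le> (\<Sum>a\<in>A. wnorm \<omega> (\<lambda>m. k a * v a m))"
    by (rule Xw_sum) (use scaled in blast)
  moreover have "(\<Sum>a\<in>A. wnorm \<omega> (\<lambda>m. k a * v a m)) \<le> (\<Sum>a\<in>A. cmod (k a) * wnorm \<omega> (v a))"
    by (rule sum_mono) (use scaled in blast)
  ultimately show ?thesis
    by linarith
qed

lemma summable_coord_if_summable_wnorm:
  assumes "\<And>k. u k \<in> Xw \<omega>" and "summable (\<lambda>k. wnorm \<omega> (u k))"
  shows "summable (\<lambda>k. u k m)"
proof (cases "m = 0")
  case True
  then show ?thesis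
    using vanishes_below_3_if_Xw[OF assms(1)] by (simp add: vanishes_below_3_def)
next
  case False
  show ?thesis
  proof (rule summable_comparison_test)
    show "\<exists>N. \<forall>k\<ge>N. norm (u k m) \<le> sqrt (\<omega> m) * wnorm \<omega> (u k)"
      using norm_le_wnorm[OF assms(1)] False by auto
    show "summable (\<lambda>k. sqrt (\<omega> m) * wnorm \<omega> (u k))"
      using assms(2) by (rule summable_mult)
  qed
qed

lemma Xw_suminf:
  assumes u: "\<And>k. u k \<in> Xw \<omega>" and summable: "summable (\<lambda>k. wnorm \<omega> (u k))"
  shows "(\<lambda>m. \<Sum>k. u k m) \<in> Xw \<omega> \<and> wnorm \<omega> (\<lambda>m. \<Sum>k. u k m) \<le> (\<Sum>k. wnorm \<omega> (u k))"
proof -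
  define F where "F = (\<lambda>m. \<Sum>k. u k m)"
  define P where "P K = (\<lambda>m. \<Sum>k<K. u k m)" for K
  have coord: "(\<lambda>K. P K m) \<longlonglongrightarrow> F m" for m
    unfolding P_def F_def by (rule summable_LIMSEQ[OF summable_coord_if_summable_wnorm[OF u summable]])
  have P_bound: "wnorm \<omega> (P K) \<le> (\<Sum>k. wnorm \<omega> (u k))" and P_Xw: "P K \<in> Xw \<omega>" for K
  proof -
    have "(\<Sum>k<K. wnorm \<omega> (u k)) \<le> (\<Sum>k. wnorm \<omega> (u k))"
      by (rule sum_le_suminf[OF summable]) (auto intro: wnorm_nonneg u)
    then show "wnorm \<omega> (P K) \<le> (\<Sum>k. wnorm \<omega> (u k))" "P K \<in> Xw \<omega>"
      using Xw_sum[of "{..<K}" u] u unfolding P_def by auto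
  qed
  have bound: "sqrt (\<Sum>n<N. (wcoord F n)\<^sup>2) \<le> (\<Sum>k. wnorm \<omega> (u k))" for N
  proof (rule Lim_bounded)
    have "(\<lambda>K. wcoord (P K) n) \<longlonglongrightarrow> wcoord F n" for n
      using weight_pos[of n] unfolding wcoord_def by (cases "n = 0") (auto intro!: tendsto_intros coord)
    then show "(\<lambda>K. sqrt (\<Sum>n<N. (wcoord (P K) n)\<^sup>2)) \<longlonglongrightarrow> sqrt (\<Sum>n<N. (wcoord F n)\<^sup>2)"
      by (intro tendsto_intros)
    show "\<forall>K\<ge>0. sqrt (\<Sum>n<N. (wcoord (P K) n)\<^sup>2) \<le> (\<Sum>k. wnorm \<omega> (u k))"
      using sqrt_partial_sum_le_wnorm[OF P_Xw] P_bound order_trans by blast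
  qed
  have "vanishes_below_3 F"
    using vanishes_below_3_if_Xw[OF u] unfolding F_def vanishes_below_3_def by simp
  with sqrt_suminf_le_of_partial_sums[OF bound] show ?thesis
    unfolding F_def by (simp add: Xw_iff wnorm_wcoord)
qed

lemma Xw_suminf_geometric:
  assumes w: "\<And>j. w j \<in> Xw \<omega>" and bound: "\<And>j. wnorm \<omega> (w j) \<le> C * (1 / 2) ^ j"
  shows "(\<lambda>m. \<Sum>j. w j m) \<in> Xw \<omega> \<and> wnorm \<omega> (\<lambda>m. \<Sum>j. w j m) \<le> 2 * C
    \<and> (\<forall>m. summable (\<lambda>j. w j m))"
proof -
  have geometric: "(\<lambda>j. C * (1 / 2) ^ j) sums (2 * C)"
    using sums_mult[OF geometric_sums[of "1 / 2 :: real"], of C] by (simp add: mult.commute)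
  have summable: "summable (\<lambda>j. wnorm \<omega> (w j))"
    by (rule summable_comparison_test'[OF sums_summable[OF geometric], where N = 0])
      (simp add: wnorm_nonneg[OF w] bound)
  have "(\<Sum>j. wnorm \<omega> (w j)) \<le> 2 * C"
    using suminf_le[OF bound summable sums_summable[OF geometric]] sums_unique[OF geometric] by simp
  then show ?thesis
    using Xw_suminf[OF w summable] summable_coord_if_summable_wnorm[OF w summable] by auto
qed

lemma exists_truncation_close:
  assumes g: "g \<in> Xw \<omega>" and "0 < e"
  shows "\<exists>M. (\<lambda>m. if m < M then g m else 0) \<in> Xw \<omega>
    \<and> wnorm \<omega> (g - (\<lambda>m. if m < M then g m else 0)) < e"
proof -
  define f where "f m = (cmod (g m))\<^sup>2 / \<omega> m" for m
  have "summable f"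
    using g unfolding Xw_def f_def by auto
  then obtain M where M: "\<bar>\<Sum>i. f (i + M)\<bar> < e\<^sup>2"
    using suminf_exist_split[of "e\<^sup>2" f] \<open>0 < e\<close> by auto
  have "(\<lambda>i. f (i + M)) sums (\<Sum>i. f (i + M))"
    using summable_sums[OF summable_ignore_initial_segment[OF \<open>summable f\<close>]] .
  moreover have "m < M" if "m \<notin> range (\<lambda>i. i + M)" for m
    using that by (metis le_add_diff_inverse2 not_less rangeI)
  ultimately have "wnorm \<omega> (g - (\<lambda>m. if m < M then g m else 0)) = sqrt (\<Sum>i. f (i + M))"
    using vanishes_below_3_if_Xw[OF g]
    by (intro Xw_strict_mono_support[where h = "\<lambda>i. i + M", THEN conjunct2])
      (auto simp: f_def strict_mono_def vanishes_below_3_def)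
  also have "\<dots> < sqrt (e\<^sup>2)"
    using M by (simp add: abs_less_iff del: real_sqrt_abs)
  also have "\<dots> = e"
    using \<open>0 < e\<close> by simp
  finally have "wnorm \<omega> (g - (\<lambda>m. if m < M then g m else 0)) < e" .
  moreover have "(\<lambda>m. if m < M then g m else 0) \<in> Xw \<omega>"
    using vanishes_below_3_if_Xw[OF g]
    by (intro finite_support_Xw) (auto simp: finite_support_def vanishes_below_3_def intro!: exI[of _ M])
  ultimately show ?thesis
    by blast
qed

context
  fixes D :: "(nat \<Rightarrow> complex) set"
  assumes D_Xw: "D \<subseteq> Xw \<omega>"
    and D_lincomb: "\<And>(A :: nat set) k v.
      (\<And>a. a \<in> A \<Longrightarrow> v a \<in> D) \<Longrightarrow> (\<lambda>m. \<Sum>a\<in>A. k a * v a m) \<in> D"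
    and approx: "\<And>a \<delta>. 3 \<le> a \<Longrightarrow> 0 < \<delta> \<Longrightarrow> \<exists>z\<in>D. wnorm \<omega> (unit_seq a - z) < \<delta>"
begin

lemma finite_support_approx_if_unit_seqs_approx:
  assumes vanishes: "vanishes_below_3 c" and M: "\<And>m. M \<le> m \<Longrightarrow> c m = 0" and "0 < e"
  shows "\<exists>x\<in>D. wnorm \<omega> (c - x) < e"
proof -
  define S where "S = (\<Sum>a\<in>{3..<M}. cmod (c a))"
  define \<delta> where "\<delta> = e / (S + 1)"
  have "0 \<le> S"
    unfolding S_def by (simp add: sum_nonneg)
  then have "0 < \<delta>" and S_\<delta>: "S * \<delta> < e"
    using \<open>0 < e\<close> by (auto simp: \<delta>_def field_simps)
  obtain z where z: "\<And>a. 3 \<le> a \<Longrightarrow> z a \<in> D \<and> wnorm \<omega> (unit_seq a - z a) < \<delta>"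
    using approx[OF _ \<open>0 < \<delta>\<close>] by metis
  define x where "x = (\<lambda>m. \<Sum>a\<in>{3..<M}. c a * z a m)"
  have "x \<in> D"
    unfolding x_def by (rule D_lincomb) (use z in auto)
  have "c m - x m = (\<Sum>a\<in>{3..<M}. c a * (unit_seq a m - z a m))" for m
    using fun_cong[OF eq_sum_unit_seq[of c M, OF vanishes M], of m]
    by (simp add: x_def sum_subtractf right_diff_distrib)
  then have "c - x = (\<lambda>m. \<Sum>a\<in>{3..<M}. c a * (unit_seq a - z a) m)"
    by (simp add: fun_eq_iff)
  moreover have "unit_seq a - z a \<in> Xw \<omega>" if "a \<in> {3..<M}" for a
    using that z[of a] D_Xw by (auto intro!: Xw_diff unit_seq_Xw)
  ultimately have "wnorm \<omega> (c - x) \<le> (\<Sum>a\<in>{3..<M}. cmod (c a) * wnorm \<omega> (unit_seq a - z a))"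
    using Xw_lincomb[of "{3..<M}" "\<lambda>a. unit_seq a - z a" c] by simp
  also have "\<dots> \<le> S * \<delta>"
    unfolding S_def sum_distrib_right using z by (intro sum_mono mult_left_mono) (auto intro: less_imp_le)
  finally show ?thesis
    using S_\<delta> \<open>x \<in> D\<close> by force
qed

lemma dense_if_unit_seqs_approx:
  assumes g: "g \<in> Xw \<omega>" and "0 < e"
  shows "\<exists>x\<in>D. wnorm \<omega> (g - x) < e"
proof -
  obtain M where gM: "(\<lambda>m. if m < M then g m else 0) \<in> Xw \<omega>"
    and M: "wnorm \<omega> (g - (\<lambda>m. if m < M then g m else 0)) < e / 2"
    using exists_truncation_close[OF g] \<open>0 < e\<close> by (metis half_gt_zero)
  obtain x where "x \<in> D" and x: "wnorm \<omega> ((\<lambda>m. if m < M then g m else 0) - x) < e / 2"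
    using finite_support_approx_if_unit_seqs_approx[of "\<lambda>m. if m < M then g m else 0" M "e / 2"]
      vanishes_below_3_if_Xw[OF gM] \<open>0 < e\<close> by auto
  have "wnorm \<omega> (g - x) \<le> wnorm \<omega> (g - (\<lambda>m. if m < M then g m else 0))
      + wnorm \<omega> ((\<lambda>m. if m < M then g m else 0) - x)"
    using \<open>x \<in> D\<close> D_Xw by (intro wnorm_diff_triangle[OF g gM]) auto
  with M x \<open>x \<in> D\<close> show ?thesis
    by (intro bexI[of _ x]) auto
qed

end

end

section \<open>Sequences annihilated by a power of \<open>T\<close>\<close>

definition annihilated :: "(nat \<Rightarrow> complex) set" where
  "annihilated = {x. finite_support x \<and> (\<exists>N. (Top ^^ N) x = (\<lambda>m. 0))}"

lemma annihilated_Xw: "x \<in> annihilated \<Longrightarrow> x \<in> Xw \<omega>"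
  unfolding annihilated_def by (auto intro: finite_support_Xw)

lemma annihilated_add:
  assumes "x \<in> annihilated" and "y \<in> annihilated"
  shows "(\<lambda>m. x m + y m) \<in> annihilated"
proof -
  obtain Mx My Nx Ny where x: "vanishes_below_3 x" "\<forall>m\<ge>Mx. x m = 0" "(Top ^^ Nx) x = (\<lambda>m. 0)"
    and y: "vanishes_below_3 y" "\<forall>m\<ge>My. y m = 0" "(Top ^^ Ny) y = (\<lambda>m. 0)"
    using assms unfolding annihilated_def finite_support_def by auto
  have "(Top ^^ max Nx Ny) x = (\<lambda>m. 0)" "(Top ^^ max Nx Ny) y = (\<lambda>m. 0)"
    using Top_pow_eq_0_mono x(3) y(3) by auto
  then have "(Top ^^ max Nx Ny) (\<lambda>m. x m + y m) = (\<lambda>m. 0)"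
    by (simp add: Top_pow_add)
  moreover have "\<forall>m\<ge>max Mx My. x m + y m = 0"
    using x(2) y(2) by simp
  moreover have "vanishes_below_3 (\<lambda>m. x m + y m)"
    using x(1) y(1) by (simp add: vanishes_below_3_def)
  ultimately show ?thesis
    unfolding annihilated_def finite_support_def by (intro CollectI conjI exI)
qed

lemma annihilated_scale:
  assumes "x \<in> annihilated"
  shows "(\<lambda>m. k * x m) \<in> annihilated"
proof -
  obtain N where "(Top ^^ N) x = (\<lambda>m. 0)"
    using assms unfolding annihilated_def by blast
  then have "(Top ^^ N) (\<lambda>m. k * x m) = (\<lambda>m. 0)"
    by (simp add: Top_pow_scale)
  moreover obtain M where "\<forall>m\<ge>M. x m = 0" and "vanishes_below_3 x"
    using assms unfolding annihilated_def finite_support_def by blast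
  ultimately show ?thesis
    unfolding annihilated_def finite_support_def vanishes_below_3_def by auto
qed

lemma annihilated_sum:
  "(\<And>i. i \<in> F \<Longrightarrow> u i \<in> annihilated) \<Longrightarrow> (\<lambda>m. \<Sum>i\<in>F. u i m) \<in> annihilated"
proof (induction F rule: infinite_finite_induct)
  case (insert i F)
  then show ?case
    using annihilated_add[of "u i" "\<lambda>m. \<Sum>i\<in>F. u i m"] by simp
qed (simp_all add: annihilated_def finite_support_def vanishes_below_3_def Top_pow_zero)

text \<open>Since \<open>T\<^sup>n S\<^sup>n\<close> is the identity, \<open>T\<^sup>n\<close> maps both \<open>e\<^sub>a\<close> and
  \<open>e\<^bsub>2\<^sup>n b\<^esub> = S\<^sup>n e\<^sub>b\<close> to \<open>e\<^sub>b\<close>.\<close>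
lemma unit_seq_diff_annihilated:
  assumes "3 \<le> a" "3 \<le> b" "(Top ^^ n) (unit_seq a) = unit_seq b"
  shows "unit_seq a - unit_seq (2 ^ n * b) \<in> annihilated"
proof -
  have "vanishes_below_3 (unit_seq b)"
    using assms(2) by (simp add: vanishes_below_3_def unit_seq_def)
  then have "(Top ^^ n) (unit_seq (2 ^ n * b)) = unit_seq b"
    by (simp add: Top_rinv_pow_unit_seq[symmetric] Top_pow_Top_rinv_pow)
  then have "(Top ^^ n) (unit_seq a - unit_seq (2 ^ n * b)) = (\<lambda>m. 0)"
    using assms(3) by (simp add: Top_pow_diff fun_eq_iff)
  moreover have "3 \<le> 2 ^ n * b"
    using assms(2) by (metis le_trans mult_le_mono1 mult_1 one_le_power one_le_numeral)
  then have "vanishes_below_3 (unit_seq a - unit_seq (2 ^ n * b))"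
    using assms(1) by (simp add: vanishes_below_3_def unit_seq_def)
  moreover have "\<forall>m\<ge>Suc (a + 2 ^ n * b). (unit_seq a - unit_seq (2 ^ n * b)) m = 0"
    by (simp add: unit_seq_def)
  ultimately show ?thesis
    unfolding annihilated_def finite_support_def by blast
qed

text \<open>The partners \<open>b = 2\<^sup>n T\<^sup>n(a) \<ge> 2\<^sup>n\<close> come from the previous lemma.\<close>
lemma infinite_annihilated_partners:
  assumes "3 \<le> a" and "\<nexists>N. (Top ^^ N) (unit_seq a) = (\<lambda>m. 0)"
  shows "infinite {b. 3 \<le> b \<and> unit_seq a - unit_seq b \<in> annihilated}"
proof -
  define b where "b n = 2 ^ n * (collatzT ^^ n) a" for n
  have orbit: "(Top ^^ n) (unit_seq a) = unit_seq ((collatzT ^^ n) a) \<and> 3 \<le> (collatzT ^^ n) a" for n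
    using Top_pow_unit_seq[OF assms(1), of n] assms(2) by auto
  have b_ge: "2 ^ n \<le> b n" for n
    using orbit[of n] by (simp add: b_def)
  have "3 \<le> b n" for n
    using orbit[of n] order_trans[of 3 "(collatzT ^^ n) a" "b n"] by (simp add: b_def)
  moreover have "unit_seq a - unit_seq (b n) \<in> annihilated" for n
    using orbit[of n] unit_seq_diff_annihilated[OF assms(1)] by (simp add: b_def)
  ultimately have "range b \<subseteq> {b. 3 \<le> b \<and> unit_seq a - unit_seq b \<in> annihilated}"
    by auto
  moreover have "infinite (range b)"
  proof
    assume "finite (range b)"
    then obtain K where "\<forall>n. b n \<le> K"
      by (auto simp: finite_nat_set_iff_bounded_le)
    then show False
      using b_ge[of K] less_exp[of K] by (metis leD le_trans)
  qed
  ultimately show ?thesis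
    using finite_subset by blast
qed

lemma unit_seq_minus_average:
  assumes "finite C" and "card C = M" and "0 < M"
  shows "unit_seq a - (\<lambda>m. \<Sum>c\<in>C. (1 / of_nat M) * (unit_seq a - unit_seq c) m)
    = (\<lambda>m. if m \<in> C then 1 / of_nat M else 0)"
proof
  fix m
  have "(\<Sum>c\<in>C. (1 / of_nat M) * (unit_seq a - unit_seq c) m)
      = unit_seq a m - (1 / of_nat M) * (\<Sum>c\<in>C. unit_seq c m)"
    using assms by (simp add: sum_distrib_left[symmetric] sum_subtractf right_diff_distrib sum_divide_distrib)
  moreover have "(\<Sum>c\<in>C. unit_seq c m) = (if m \<in> C then 1 else 0)"
    unfolding unit_seq_def using assms(1) by simp
  ultimately show "(unit_seq a - (\<lambda>m. \<Sum>c\<in>C. (1 / of_nat M) * (unit_seq a - unit_seq c) m)) m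
      = (if m \<in> C then 1 / of_nat M else 0)"
    by simp
qed

section \<open>Enumerations\<close>

definition rat_seq :: "(rat \<times> rat) list \<Rightarrow> nat \<Rightarrow> complex" where
  "rat_seq L m =
    (if 3 \<le> m \<and> m < length L then Complex (of_rat (fst (L ! m))) (of_rat (snd (L ! m))) else 0)"

lemma finite_support_rat_seq: "finite_support (rat_seq L)"
  unfolding finite_support_def vanishes_below_3_def rat_seq_def by (auto intro!: exI[of _ "length L"])

lemma exists_rat_near:
  fixes x \<delta> :: real
  assumes "0 < \<delta>"
  shows "\<exists>q. \<bar>of_rat q - x\<bar> < \<delta>"
proof -
  obtain r where "r \<in> \<rat>" "x - \<delta> < r" "r < x + \<delta>"
    using Rats_dense_in_real[of "x - \<delta>" "x + \<delta>"] assms by auto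
  moreover from \<open>r \<in> \<rat>\<close> obtain q where "r = of_rat q"
    by (rule Rats_cases)
  ultimately show ?thesis
    by (intro exI[of _ q]) (simp add: abs_less_iff)
qed

lemma exists_from_nat_ge: "\<exists>k\<ge>K0. \<exists>i\<ge>i0. from_nat k = (x :: 'a :: countable, i :: nat)"
proof -
  have "inj_on (\<lambda>i. to_nat (x, i)) {i0..}"
    by (auto simp: inj_on_def)
  then have "infinite ((\<lambda>i. to_nat (x, i)) ` {i0..})"
    using finite_imageD infinite_Ici by blast
  then obtain i where "i0 \<le> i" and "K0 \<le> to_nat (x, i)"
    unfolding infinite_nat_iff_unbounded_le by blast
  then show ?thesis
    by (intro exI[of _ "to_nat (x, i)"]) auto
qed

lemma exists_gapped_seq:
  fixes d N :: "nat \<Rightarrow> nat"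
  shows "\<exists>n. (\<forall>k. d k \<le> n k) \<and> (\<forall>k K. k < K \<longrightarrow> n k + N k \<le> n K)
    \<and> (\<forall>k K. K < k \<longrightarrow> n K + d k \<le> n k)"
proof -
  define n where "n = rec_nat (d 0) (\<lambda>k r. r + N k + d (Suc k) + 1)"
  have n_Suc: "n (Suc k) = n k + N k + d (Suc k) + 1" for k
    by (simp add: n_def)
  have mono: "n k \<le> n K" if "k \<le> K" for k K
    by (rule lift_Suc_mono_le[of n, OF _ that]) (simp add: n_Suc)
  have "(\<forall>k. d k \<le> n k) \<and> (\<forall>k K. k < K \<longrightarrow> n k + N k \<le> n K)
    \<and> (\<forall>k K. K < k \<longrightarrow> n K + d k \<le> n k)"
  proof (intro conjI allI impI)
    fix k K
    show "d k \<le> n k"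
      by (cases k) (simp_all add: n_def)
    show "n k + N k \<le> n K" if "k < K"
      using mono[of "Suc k" K] that n_Suc[of k] by simp
    show "n K + d k \<le> n k" if "K < k"
    proof (cases k)
      case (Suc k')
      then show ?thesis
        using mono[of K k'] n_Suc[of k'] that by simp
    qed (use that in simp)
  qed
  then show ?thesis
    by blast
qed

section \<open>Chaos under the weight conditions\<close>

locale collatz_weight =
  fixes \<omega> :: "nat \<Rightarrow> real" and c0 :: real
  assumes c0_pos: "0 < c0"
    and weight_ge: "\<And>n. 1 \<le> n \<Longrightarrow> c0 \<le> \<omega> n"
    and summable_weight_dyadic: "\<And>k. 3 \<le> k \<Longrightarrow> summable (\<lambda>n. 1 / \<omega> (k * 2 ^ n))"

sublocale collatz_weight \<subseteq> pos_weight
  using c0_pos weight_ge by unfold_locales (meson less_le_trans)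

context collatz_weight

begin

lemma wnorm_le_card:
  assumes "vanishes_below_3 c" "finite A" "\<And>m. m \<notin> A \<Longrightarrow> c m = 0" "\<And>m. cmod (c m) \<le> \<delta>"
  shows "c \<in> Xw \<omega> \<and> wnorm \<omega> c \<le> \<delta> * sqrt (card A / c0)"
proof -
  have "0 \<le> \<delta>"
    using assms(4)[of 0] norm_ge_zero order_trans by blast
  have "(cmod (c m))\<^sup>2 / \<omega> m \<le> \<delta>\<^sup>2 / c0" for m
  proof (cases "m = 0")
    case True
    then show ?thesis
      using assms(1) c0_pos by (simp add: vanishes_below_3_def)
  next
    case False
    then have "c0 \<le> \<omega> m"
      using weight_ge by simp
    moreover have "(cmod (c m))\<^sup>2 \<le> \<delta>\<^sup>2"
      using assms(4)[of m] by (simp add: power_mono)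
    ultimately show ?thesis
      using c0_pos by (intro frac_le) auto
  qed
  then have "(\<Sum>m\<in>A. (cmod (c m))\<^sup>2 / \<omega> m) \<le> (\<delta> * sqrt (card A / c0))\<^sup>2"
    using sum_mono[of A "\<lambda>m. (cmod (c m))\<^sup>2 / \<omega> m" "\<lambda>_. \<delta>\<^sup>2 / c0"] c0_pos
    by (simp add: power_mult_distrib mult.commute)
  moreover have "0 \<le> \<delta> * sqrt (card A / c0)"
    using \<open>0 \<le> \<delta>\<close> c0_pos by simp
  ultimately show ?thesis
    using Xw_finite_support[OF assms(1-3)] by (simp add: real_le_lsqrt)
qed

lemma wnorm_average_unit_seqs:
  assumes "finite C" "card C = M" "0 < M" "C \<subseteq> {3..}"
  shows "wnorm \<omega> (\<lambda>m. if m \<in> C then 1 / of_nat M else 0) \<le> 1 / sqrt (M * c0)"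
proof -
  have "vanishes_below_3 (\<lambda>m. if m \<in> C then 1 / of_nat M else 0)"
    using assms(4) by (auto simp: vanishes_below_3_def)
  then have "wnorm \<omega> (\<lambda>m. if m \<in> C then 1 / of_nat M else 0) \<le> 1 / M * sqrt (M / c0)"
    using wnorm_le_card[OF _ assms(1), of _ "1 / M"] assms(2) by (simp add: norm_divide)
  also have "1 / M * sqrt (M / c0) = 1 / sqrt (M * c0)"
    using assms(3) c0_pos by (simp add: real_sqrt_divide real_sqrt_mult field_simps)
  finally show ?thesis .
qed

lemma unit_seq_approx_annihilated:
  assumes "3 \<le> a" and "0 < \<delta>"
  shows "\<exists>z\<in>annihilated. wnorm \<omega> (unit_seq a - z) < \<delta>"
proof (cases "\<exists>N. (Top ^^ N) (unit_seq a) = (\<lambda>m. 0)")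
  case True
  then have "unit_seq a \<in> annihilated"
    using assms(1) unfolding annihilated_def finite_support_def vanishes_below_3_def unit_seq_def
    by (auto intro!: exI[of _ "Suc a"])
  then show ?thesis
    using assms(2) by (intro bexI[of _ "unit_seq a"]) (simp_all add: wnorm_def)
next
  case False
  obtain M :: nat where M: "1 / (c0 * \<delta>\<^sup>2) < M"
    using reals_Archimedean2 by blast
  moreover have "0 < 1 / (c0 * \<delta>\<^sup>2)"
    using c0_pos assms(2) by simp
  ultimately have "0 < M"
    by (metis of_nat_0_less_iff order_less_trans)
  obtain C where C: "C \<subseteq> {b. 3 \<le> b \<and> unit_seq a - unit_seq b \<in> annihilated}" "finite C" "card C = M"
    using infinite_arbitrarily_large[OF infinite_annihilated_partners[OF assms(1)]] False by blast
  define z where "z = (\<lambda>m. \<Sum>c\<in>C. (1 / of_nat M) * (unit_seq a - unit_seq c) m)"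
  have "z \<in> annihilated"
    unfolding z_def using C(1) by (intro annihilated_sum annihilated_scale) (auto simp: fun_diff_def)
  have "wnorm \<omega> (unit_seq a - z) \<le> 1 / sqrt (M * c0)"
    unfolding z_def unit_seq_minus_average[OF C(2,3) \<open>0 < M\<close>]
    using C \<open>0 < M\<close> by (intro wnorm_average_unit_seqs) auto
  also have "\<dots> = sqrt (1 / (M * c0))"
    by (simp add: real_sqrt_divide)
  also have "\<dots> < sqrt (\<delta>\<^sup>2)"
    by (rule real_sqrt_less_mono) (use M \<open>0 < M\<close> c0_pos assms(2) in \<open>simp add: field_simps\<close>)
  also have "\<dots> = \<delta>"
    using assms(2) by simp
  finally show ?thesis
    using \<open>z \<in> annihilated\<close> by blast
qed

lemma annihilated_dense:
  assumes "g \<in> Xw \<omega>" and "0 < e"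
  shows "\<exists>x\<in>annihilated. wnorm \<omega> (g - x) < e"
proof (rule dense_if_unit_seqs_approx[OF _ _ _ assms])
  show "annihilated \<subseteq> Xw \<omega>"
    using annihilated_Xw by blast
  show "(\<lambda>m. \<Sum>a\<in>A. k a * v a m) \<in> annihilated" if "\<And>a. a \<in> A \<Longrightarrow> v a \<in> annihilated" for A k v
    using that annihilated_sum[of A "\<lambda>a m. k a * v a m"] annihilated_scale by blast
qed (rule unit_seq_approx_annihilated)

lemma exists_rat_seq_close:
  fixes M :: nat
  assumes vanishes: "vanishes_below_3 c" and M: "\<And>m. M \<le> m \<Longrightarrow> c m = 0" and "0 < \<delta>"
  shows "\<exists>L. wnorm \<omega> (c - rat_seq L) \<le> \<delta> * sqrt (M / c0)"
proof -
  obtain q where q: "\<And>x. \<bar>of_rat (q x) - x\<bar> < \<delta> / 2"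
    using exists_rat_near[of "\<delta> / 2"] \<open>0 < \<delta>\<close> by (metis half_gt_zero)
  define L where "L = map (\<lambda>m. (q (Re (c m)), q (Im (c m)))) [0..<M]"
  have "cmod ((c - rat_seq L) m) \<le> \<delta>" for m
  proof (cases "3 \<le> m \<and> m < M")
    case True
    then have "cmod ((c - rat_seq L) m)
        \<le> \<bar>Re (c m) - of_rat (q (Re (c m)))\<bar> + \<bar>Im (c m) - of_rat (q (Im (c m)))\<bar>"
      using cmod_le[of "(c - rat_seq L) m"] by (simp add: rat_seq_def L_def)
    also have "\<dots> \<le> \<delta>"
      using q[of "Re (c m)"] q[of "Im (c m)"] by (simp add: abs_minus_commute)
    finally show ?thesis .
  next
    case False
    then show ?thesis
      using vanishes M \<open>0 < \<delta>\<close> by (auto simp: rat_seq_def L_def vanishes_below_3_def not_le)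
  qed
  moreover have "vanishes_below_3 (c - rat_seq L)"
    using vanishes by (simp add: vanishes_below_3_def rat_seq_def)
  moreover have "(c - rat_seq L) m = 0" if "m \<notin> {..<M}" for m
    using that M by (simp add: rat_seq_def L_def)
  ultimately have "wnorm \<omega> (c - rat_seq L) \<le> \<delta> * sqrt (card {..<M} / c0)"
    using wnorm_le_card[of "c - rat_seq L" "{..<M}" \<delta>] by blast
  then show ?thesis
    by auto
qed

lemma rat_seq_dense:
  assumes g: "g \<in> Xw \<omega>" and "0 < e"
  shows "\<exists>L. wnorm \<omega> (g - rat_seq L) < e"
proof -
  obtain M where gM: "(\<lambda>m. if m < M then g m else 0) \<in> Xw \<omega>"
    and M: "wnorm \<omega> (g - (\<lambda>m. if m < M then g m else 0)) < e / 2"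
    using exists_truncation_close[OF g] \<open>0 < e\<close> by (metis half_gt_zero)
  define s where "s = sqrt (M / c0)"
  define \<delta> where "\<delta> = e / (2 * (s + 1))"
  have "0 \<le> s"
    using c0_pos by (simp add: s_def)
  then have "0 < \<delta>" and \<delta>_small: "\<delta> * s < e / 2"
    using \<open>0 < e\<close> by (auto simp: \<delta>_def field_simps)
  obtain L where L: "wnorm \<omega> ((\<lambda>m. if m < M then g m else 0) - rat_seq L) \<le> \<delta> * s"
    using exists_rat_seq_close[of "\<lambda>m. if m < M then g m else 0" M] vanishes_below_3_if_Xw[OF gM]
      \<open>0 < \<delta>\<close> unfolding s_def by auto
  have "wnorm \<omega> (g - rat_seq L)
      \<le> wnorm \<omega> (g - (\<lambda>m. if m < M then g m else 0)) + wnorm \<omega> ((\<lambda>m. if m < M then g m else 0) - rat_seq L)"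
    using finite_support_Xw[OF finite_support_rat_seq] by (rule wnorm_diff_triangle[OF g gM])
  then show ?thesis
    using M L \<delta>_small by (intro exI[of _ L]) linarith
qed

lemma exists_dense_annihilated_seq:
  "\<exists>xs :: nat \<Rightarrow> nat \<Rightarrow> complex. (\<forall>k. xs k \<in> annihilated)
    \<and> (\<forall>g\<in>Xw \<omega>. \<forall>e>0. \<forall>K0. \<exists>K\<ge>K0. wnorm \<omega> (g - xs K) < e)"
proof -
  let ?L = "\<lambda>k. fst (from_nat k :: (rat \<times> rat) list \<times> nat)"
  let ?i = "\<lambda>k. snd (from_nat k :: (rat \<times> rat) list \<times> nat)"
  have "\<forall>k. \<exists>x. x \<in> annihilated \<and> wnorm \<omega> (rat_seq (?L k) - x) < 1 / Suc (?i k)"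
  proof
    fix k
    show "\<exists>x. x \<in> annihilated \<and> wnorm \<omega> (rat_seq (?L k) - x) < 1 / Suc (?i k)"
      using annihilated_dense[OF finite_support_Xw[OF finite_support_rat_seq], of "1 / Suc (?i k)"]
      by auto
  qed
  from choice[OF this] obtain xs where
    "\<forall>k. xs k \<in> annihilated \<and> wnorm \<omega> (rat_seq (?L k) - xs k) < 1 / Suc (?i k)" ..
  then have xs: "\<And>k. xs k \<in> annihilated"
    and xs_close: "\<And>k. wnorm \<omega> (rat_seq (?L k) - xs k) < 1 / Suc (?i k)"
    by blast+
  show ?thesis
  proof (intro exI[of _ xs] conjI allI ballI impI xs)
    fix g and e :: real and K0 :: nat
    assume g: "g \<in> Xw \<omega>" and "0 < e"
    obtain L where L: "wnorm \<omega> (g - rat_seq L) < e / 2"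
      using rat_seq_dense[OF g] \<open>0 < e\<close> by (metis half_gt_zero)
    obtain i0 :: nat where "2 / e < i0"
      using reals_Archimedean2 by blast
    then obtain K i where "K0 \<le> K" "i0 \<le> i" and K: "from_nat K = (L, i)"
      using exists_from_nat_ge by blast
    then have "2 / e < Suc i"
      using \<open>2 / e < i0\<close> by linarith
    then have "1 / Suc i < e / 2"
      using \<open>0 < e\<close> by (simp add: field_simps)
    then have "wnorm \<omega> (rat_seq L - xs K) < e / 2"
      using xs_close[of K] by (simp add: K)
    moreover have "wnorm \<omega> (g - xs K) \<le> wnorm \<omega> (g - rat_seq L) + wnorm \<omega> (rat_seq L - xs K)"
      using finite_support_Xw[OF finite_support_rat_seq] annihilated_Xw[OF xs]
      by (rule wnorm_diff_triangle[OF g])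
    ultimately show "\<exists>K\<ge>K0. wnorm \<omega> (g - xs K) < e"
      using L by (intro exI[of _ K] conjI \<open>K0 \<le> K\<close>) linarith
  qed
qed

lemma Top_rinv_pow_tendsto_0:
  assumes "finite_support x"
  shows "(\<lambda>n. wnorm \<omega> ((Top_rinv ^^ n) x)) \<longlonglongrightarrow> 0"
proof -
  obtain M where vanishes: "vanishes_below_3 x" and M: "\<And>m. M \<le> m \<Longrightarrow> x m = 0"
    using assms unfolding finite_support_def by blast
  have "(\<lambda>n. (cmod (x a))\<^sup>2 / \<omega> (a * 2 ^ n)) \<longlonglongrightarrow> 0" for a
  proof (cases "3 \<le> a")
    case True
    have "(\<lambda>n. (cmod (x a))\<^sup>2 * (1 / \<omega> (a * 2 ^ n))) \<longlonglongrightarrow> (cmod (x a))\<^sup>2 * 0"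
      using summable_LIMSEQ_zero[OF summable_weight_dyadic[OF True]] by (intro tendsto_intros)
    then show ?thesis
      by simp
  qed (use vanishes in \<open>simp add: vanishes_below_3_def\<close>)
  then have "(\<lambda>n. sqrt (\<Sum>a<M. (cmod (x a))\<^sup>2 / \<omega> (a * 2 ^ n))) \<longlonglongrightarrow> sqrt (\<Sum>a<M. 0)"
    by (intro tendsto_intros)
  moreover have "wnorm \<omega> ((Top_rinv ^^ n) x) = sqrt (\<Sum>a<M. (cmod (x a))\<^sup>2 / \<omega> (a * 2 ^ n))" for n
    using wnorm_Top_rinv_pow[OF vanishes M] by blast
  ultimately show ?thesis
    by simp
qed

text \<open>By the gaps, \<open>T\<^bsup>n\<^sub>K\<^esup>\<close> annihilates the terms \<open>k < K\<close> and leaves the terms \<open>k > K\<close> shifted by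
  at least \<open>d\<^sub>k\<close>, where they have norm at most \<open>2\<^sup>-\<^sup>k\<close>.\<close>
lemma orbit_shadows_seq:
  fixes xs :: "nat \<Rightarrow> nat \<Rightarrow> complex" and n :: "nat \<Rightarrow> nat"
  defines "F \<equiv> \<lambda>m. \<Sum>k. (Top_rinv ^^ n k) (xs k) m"
  assumes fs: "\<And>k. finite_support (xs k)"
    and killed: "\<And>k. (Top ^^ N k) (xs k) = (\<lambda>m. 0)"
    and small: "\<And>k m. d k \<le> m \<Longrightarrow> wnorm \<omega> ((Top_rinv ^^ m) (xs k)) \<le> (1 / 2) ^ k"
    and n_ge: "\<And>k. d k \<le> n k"
    and gap_before: "\<And>k K. k < K \<Longrightarrow> n k + N k \<le> n K"
    and gap_after: "\<And>k K. K < k \<Longrightarrow> n K + d k \<le> n k"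
  shows "F \<in> Xw \<omega>"
    and "(Top ^^ n K) F \<in> Xw \<omega> \<and> wnorm \<omega> ((Top ^^ n K) F - xs K) \<le> (1 / 2) ^ K"
proof -
  have vanishes: "vanishes_below_3 (xs k)" for k
    using fs unfolding finite_support_def by blast
  have Xw: "(Top_rinv ^^ m) (xs k) \<in> Xw \<omega>" for k m
    using fs[of k] wnorm_Top_rinv_pow unfolding finite_support_def by blast
  have "wnorm \<omega> ((Top_rinv ^^ n k) (xs k)) \<le> 1 * (1 / 2) ^ k" for k
    using small[OF n_ge] by simp
  then have F: "F \<in> Xw \<omega> \<and> (\<forall>m. summable (\<lambda>k. (Top_rinv ^^ n k) (xs k) m))"
    unfolding F_def using Xw_suminf_geometric[where w = "\<lambda>k. (Top_rinv ^^ n k) (xs k)", OF Xw] by blast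
  then show "F \<in> Xw \<omega>"
    by blast
  define W where "W = (\<lambda>m. \<Sum>j. (Top_rinv ^^ (n (j + Suc K) - n K)) (xs (j + Suc K)) m)"
  have orbit: "(Top ^^ n K) F = (\<lambda>m. xs K m + W m)"
    unfolding F_def W_def using vanishes killed gap_before F[unfolded F_def]
    by (intro Top_pow_suminf_Top_rinv_pow) auto
  have "wnorm \<omega> ((Top_rinv ^^ (n (j + Suc K) - n K)) (xs (j + Suc K)))
      \<le> (1 / 2) ^ Suc K * (1 / 2) ^ j" for j
    using small[of "j + Suc K"] gap_after[of K "j + Suc K"] by (simp add: power_add mult.commute)
  then have W: "W \<in> Xw \<omega> \<and> wnorm \<omega> W \<le> 2 * (1 / 2) ^ Suc K"
    unfolding W_def
    using Xw_suminf_geometric[where w = "\<lambda>j. (Top_rinv ^^ (n (j + Suc K) - n K)) (xs (j + Suc K))",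
        OF Xw]
    by blast
  have "(Top ^^ n K) F \<in> Xw \<omega>"
    unfolding orbit using Xw_add[OF finite_support_Xw[OF fs] W[THEN conjunct1]] by blast
  moreover have "(Top ^^ n K) F - xs K = W"
    unfolding orbit by (simp add: fun_eq_iff)
  ultimately show "(Top ^^ n K) F \<in> Xw \<omega> \<and> wnorm \<omega> ((Top ^^ n K) F - xs K) \<le> (1 / 2) ^ K"
    using W by simp
qed

lemma exists_orbit_shadowing:
  assumes xs: "\<And>k. xs k \<in> annihilated"
  shows "\<exists>F\<in>Xw \<omega>. \<forall>K. \<exists>j. (Top ^^ j) F \<in> Xw \<omega> \<and> wnorm \<omega> ((Top ^^ j) F - xs K) \<le> (1 / 2) ^ K"
proof -
  have fs: "finite_support (xs k)" for k
    using xs unfolding annihilated_def by blast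
  have "\<forall>k. \<exists>N. (Top ^^ N) (xs k) = (\<lambda>m. 0)"
    using xs unfolding annihilated_def by blast
  from choice[OF this] obtain N where killed: "\<And>k. (Top ^^ N k) (xs k) = (\<lambda>m. 0)"
    by blast
  have "\<forall>\<^sub>F m in sequentially. wnorm \<omega> ((Top_rinv ^^ m) (xs k)) < (1 / 2) ^ k" for k
    using Top_rinv_pow_tendsto_0[OF fs] by (rule order_tendstoD) simp
  then have "\<forall>k. \<exists>d. \<forall>m\<ge>d. wnorm \<omega> ((Top_rinv ^^ m) (xs k)) \<le> (1 / 2) ^ k"
    unfolding eventually_sequentially by (meson less_imp_le)
  from choice[OF this] obtain d
    where small: "\<And>k m. d k \<le> m \<Longrightarrow> wnorm \<omega> ((Top_rinv ^^ m) (xs k)) \<le> (1 / 2) ^ k"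
    by blast
  obtain n where gaps: "\<And>k. d k \<le> n k" "\<And>k K. k < K \<Longrightarrow> n k + N k \<le> n K"
    "\<And>k K. K < k \<Longrightarrow> n K + d k \<le> n k"
    using exists_gapped_seq[of d N] by blast
  show ?thesis
    using orbit_shadows_seq[of xs N d n] fs killed small gaps by blast
qed

lemma hypercyclic_Top: "hypercyclic \<omega>"
proof -
  obtain xs :: "nat \<Rightarrow> nat \<Rightarrow> complex" where xs: "\<And>k. xs k \<in> annihilated"
    and xs_dense: "\<And>g e K0. g \<in> Xw \<omega> \<Longrightarrow> 0 < e \<Longrightarrow> \<exists>K\<ge>K0. wnorm \<omega> (g - xs K) < e"
    using exists_dense_annihilated_seq by metis
  obtain F where "F \<in> Xw \<omega>"
    and shadow: "\<And>K. \<exists>j. (Top ^^ j) F \<in> Xw \<omega> \<and> wnorm \<omega> ((Top ^^ j) F - xs K) \<le> (1 / 2) ^ K"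
    using exists_orbit_shadowing[where xs = xs, OF xs] by blast
  have "\<exists>j. wnorm \<omega> ((Top ^^ j) F - g) < e" if g: "g \<in> Xw \<omega>" and "0 < e" for g e
  proof -
    obtain K0 where K0: "(1 / 2) ^ K0 < e / 2"
      using real_arch_pow_inv[of "e / 2" "1 / 2 :: real"] \<open>0 < e\<close> by auto
    obtain K where "K0 \<le> K" and close: "wnorm \<omega> (g - xs K) < e / 2"
      using xs_dense[OF g, of "e / 2"] \<open>0 < e\<close> by auto
    obtain j where orbit: "(Top ^^ j) F \<in> Xw \<omega>" and "wnorm \<omega> ((Top ^^ j) F - xs K) \<le> (1 / 2) ^ K"
      using shadow by blast
    moreover have "(1 / 2 :: real) ^ K \<le> (1 / 2) ^ K0"
      by (rule power_decreasing[OF \<open>K0 \<le> K\<close>]) simp_all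
    moreover have "wnorm \<omega> ((Top ^^ j) F - g) \<le> wnorm \<omega> ((Top ^^ j) F - xs K) + wnorm \<omega> (xs K - g)"
      using orbit annihilated_Xw[OF xs] g by (rule wnorm_diff_triangle)
    ultimately have "wnorm \<omega> ((Top ^^ j) F - g) < e"
      using K0 close wnorm_commute[of \<omega> "xs K" g] by linarith
    then show ?thesis ..
  qed
  with \<open>F \<in> Xw \<omega>\<close> show ?thesis
    unfolding hypercyclic_def by blast
qed

lemma lacunary_Xw:
  assumes "3 \<le> a" and "1 \<le> N"
  shows "lacunary a N \<in> Xw \<omega> \<and> wnorm \<omega> (lacunary a N) \<le> sqrt (\<Sum>j. 1 / \<omega> (a * 2 ^ (j + N)))"
proof -
  define u where "u j = 1 / \<omega> (a * 2 ^ (j + N))" for j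
  define h where "h n = a * 2 ^ (Suc n * N)" for n
  have u_nonneg: "0 \<le> u j" for j
    using weight_pos[of "a * 2 ^ (j + N)"] assms(1) by (simp add: u_def)
  have "summable u"
    using summable_weight_dyadic[OF assms(1)] unfolding u_def by (rule summable_ignore_initial_segment)
  moreover have "inj (\<lambda>n. n * N)"
    using assms(2) by (auto simp: inj_on_def)
  ultimately have "summable (u \<circ> (\<lambda>n. n * N))" and le: "suminf (u \<circ> (\<lambda>n. n * N)) \<le> suminf u"
    using summable_reindex suminf_reindex_mono u_nonneg by blast+
  moreover have "(\<lambda>n. (cmod (lacunary a N (h n)))\<^sup>2 / \<omega> (h n)) = u \<circ> (\<lambda>n. n * N)"
    by (auto simp: lacunary_def h_def u_def add.commute)
  ultimately have sums: "(\<lambda>n. (cmod (lacunary a N (h n)))\<^sup>2 / \<omega> (h n)) sums suminf (u \<circ> (\<lambda>n. n * N))"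
    by (simp add: summable_sums)
  have "strict_mono h"
    using assms by (simp add: strict_mono_Suc_iff h_def)
  moreover have "lacunary a N m = 0" if "m \<notin> range h" for m
    using that by (auto simp: lacunary_def h_def)
  moreover have "vanishes_below_3 (lacunary a N)"
  proof -
    have "\<not> a * 2 ^ k < 3" for k
      using assms(1) order_trans[of 3 a "a * 2 ^ k"] by simp
    then show ?thesis
      by (auto simp: vanishes_below_3_def lacunary_def)
  qed
  ultimately have "lacunary a N \<in> Xw \<omega> \<and> wnorm \<omega> (lacunary a N) = sqrt (suminf (u \<circ> (\<lambda>n. n * N)))"
    using Xw_strict_mono_support[where \<omega> = \<omega>, OF _ _ _ sums] by blast
  with le show ?thesis
    unfolding u_def by simp
qed

lemma wnorm_lacunary_tendsto_0:
  assumes "3 \<le> a"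
  shows "(\<lambda>N. wnorm \<omega> (lacunary a N)) \<longlonglongrightarrow> 0"
proof (rule tendsto_sandwich)
  show "\<forall>\<^sub>F N in sequentially. 0 \<le> wnorm \<omega> (lacunary a N)"
    using lacunary_Xw[OF assms] wnorm_nonneg by (auto simp: eventually_sequentially intro!: exI[of _ 1])
  show "\<forall>\<^sub>F N in sequentially. wnorm \<omega> (lacunary a N) \<le> sqrt (\<Sum>j. 1 / \<omega> (a * 2 ^ (j + N)))"
    using lacunary_Xw[OF assms] by (auto simp: eventually_sequentially intro!: exI[of _ 1])
  show "(\<lambda>N. sqrt (\<Sum>j. 1 / \<omega> (a * 2 ^ (j + N)))) \<longlonglongrightarrow> 0"
    using tendsto_real_sqrt[OF suminf_tail_tendsto_0[OF summable_weight_dyadic[OF assms]]]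
    by simp
qed simp

lemma periodic_extension:
  fixes y :: "nat \<Rightarrow> complex" and M N :: nat
  defines "f \<equiv> \<lambda>m. y m + (\<Sum>a\<in>{3..<M}. y a * lacunary a N m)"
  assumes vanishes: "vanishes_below_3 y" and M: "\<And>m. M \<le> m \<Longrightarrow> y m = 0"
    and killed: "(Top ^^ N) y = (\<lambda>m. 0)" and "1 \<le> N"
  shows "f \<in> Xw \<omega>" and "(Top ^^ N) f = f"
proof -
  have "y \<in> Xw \<omega>"
    using vanishes M by (intro finite_support_Xw) (auto simp: finite_support_def)
  moreover have "(\<lambda>m. \<Sum>a\<in>{3..<M}. y a * lacunary a N m) \<in> Xw \<omega>"
    using lacunary_Xw \<open>1 \<le> N\<close> by (intro Xw_lincomb[THEN conjunct1]) auto
  ultimately show "f \<in> Xw \<omega>"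
    unfolding f_def by (rule Xw_add[THEN conjunct1])
  have "y = (\<lambda>m. \<Sum>a\<in>{3..<M}. y a * unit_seq a m)"
    by (rule eq_sum_unit_seq[of y M, OF vanishes M])
  then have "f = (\<lambda>m. \<Sum>a\<in>{3..<M}. y a * (unit_seq a m + lacunary a N m))"
    unfolding f_def by (subst (1) \<open>y = _\<close>) (simp add: distrib_left sum.distrib)
  then have "(Top_rinv ^^ N) f = (\<lambda>m. \<Sum>a\<in>{3..<M}. y a * lacunary a N m)"
    using Top_rinv_pow_lincomb_lacunary[of "{3..<M}" N y] \<open>1 \<le> N\<close> by simp
  then show "(Top ^^ N) f = f"
    using killed vanishes_below_3_if_Xw[OF \<open>f \<in> Xw \<omega>\<close>]
    by (intro Top_pow_eq_if_Top_rinv_pow) (simp_all add: f_def)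
qed

lemma periodic_near_annihilated:
  assumes "y \<in> annihilated" and "0 < e"
  shows "\<exists>f\<in>Xw \<omega>. (\<exists>N\<ge>1. (Top ^^ N) f = f) \<and> wnorm \<omega> (f - y) < e"
proof -
  obtain M N0 where vanishes: "vanishes_below_3 y" and M: "\<And>m. M \<le> m \<Longrightarrow> y m = 0"
    and killed: "(Top ^^ N0) y = (\<lambda>m. 0)"
    using assms(1) unfolding annihilated_def finite_support_def by blast
  have "(\<lambda>N. \<Sum>a\<in>{3..<M}. cmod (y a) * wnorm \<omega> (lacunary a N))
      \<longlonglongrightarrow> (\<Sum>a\<in>{3..<M}. cmod (y a) * 0)"
    using wnorm_lacunary_tendsto_0 by (intro tendsto_intros) simp
  then have "\<forall>\<^sub>F N in sequentially. (\<Sum>a\<in>{3..<M}. cmod (y a) * wnorm \<omega> (lacunary a N)) < e"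
    using assms(2) by (auto intro: order_tendstoD)
  then obtain N where N: "max 1 N0 \<le> N"
    and small: "(\<Sum>a\<in>{3..<M}. cmod (y a) * wnorm \<omega> (lacunary a N)) < e"
    unfolding eventually_sequentially by (meson order_refl max.cobounded2 le_trans nat_le_linear)
  define W where "W = (\<lambda>m. \<Sum>a\<in>{3..<M}. y a * lacunary a N m)"
  have "wnorm \<omega> W < e"
    unfolding W_def using N lacunary_Xw Xw_lincomb[of "{3..<M}" "\<lambda>a. lacunary a N" y] small
    by fastforce
  moreover have "(\<lambda>m. y m + W m) - y = W"
    by (simp add: fun_eq_iff)
  moreover have "(\<lambda>m. y m + W m) \<in> Xw \<omega>" "(Top ^^ N) (\<lambda>m. y m + W m) = (\<lambda>m. y m + W m)"
    using periodic_extension[OF vanishes M Top_pow_eq_0_mono[OF killed]] N unfolding W_def by auto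
  ultimately show ?thesis
    using N by (intro bexI[of _ "\<lambda>m. y m + W m"]) auto
qed

lemma periodic_points_dense_Top: "periodic_points_dense \<omega>"
  unfolding periodic_points_dense_def
proof (intro ballI allI impI)
  fix g and e :: real
  assume g: "g \<in> Xw \<omega>" and "0 < e"
  obtain y where "y \<in> annihilated" and y: "wnorm \<omega> (g - y) < e / 2"
    using annihilated_dense[OF g, of "e / 2"] \<open>0 < e\<close> by auto
  then obtain f N where f: "f \<in> Xw \<omega>" "1 \<le> N" "(Top ^^ N) f = f" and fy: "wnorm \<omega> (f - y) < e / 2"
    using periodic_near_annihilated[of y "e / 2"] \<open>0 < e\<close> by auto
  have "wnorm \<omega> (f - g) \<le> wnorm \<omega> (f - y) + wnorm \<omega> (y - g)"
    using f(1) annihilated_Xw[OF \<open>y \<in> annihilated\<close>] g by (rule wnorm_diff_triangle)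
  then have "wnorm \<omega> (f - g) < e"
    using fy y wnorm_commute[of \<omega> y g] by linarith
  with f show "\<exists>f\<in>Xw \<omega>. (\<exists>N\<ge>1. (Top ^^ N) f = f) \<and> wnorm \<omega> (f - g) < e"
    by blast
qed

lemma chaotic_Top: "chaotic \<omega>"
  unfolding chaotic_def using hypercyclic_Top periodic_points_dense_Top by blast

end

lemma collatz_weight_omega0: "collatz_weight omega0 (1 / pi)"
proof
  fix n :: nat
  assume "1 \<le> n"
  then show "1 / pi \<le> omega0 n"
    unfolding omega0_def by (intro divide_right_mono) auto
next
  fix k :: nat
  assume "3 \<le> k"
  have "1 / omega0 (k * 2 ^ n) \<le> pi * (1 / 2) ^ n" for n
  proof -
    have "1 * (2 :: real) ^ n \<le> real k * 2 ^ n"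
      by (rule mult_right_mono) (use \<open>3 \<le> k\<close> in auto)
    moreover have "real (k * 2 ^ n) = real k * 2 ^ n"
      by simp
    ultimately have "(2 :: real) ^ n \<le> real (k * 2 ^ n) + 1"
      by linarith
    then have "pi / (real (k * 2 ^ n) + 1) \<le> pi / 2 ^ n"
      by (intro frac_le) auto
    then show ?thesis
      unfolding omega0_def by (simp add: power_divide)
  qed
  moreover have "0 \<le> 1 / omega0 (k * 2 ^ n)" for n
    unfolding omega0_def by simp
  ultimately show "summable (\<lambda>n. 1 / omega0 (k * 2 ^ n))"
    by (intro summable_comparison_test'[OF summable_mult[OF summable_geometric], where N = 0]) auto
qed simp

theorem theorem3p18:
  shows "(\<forall>\<omega> :: nat \<Rightarrow> real.
            (\<forall>n\<ge>1. \<omega> n > 0)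
          \<and> (\<exists>c>0. \<forall>n\<ge>1. c \<le> \<omega> n)
          \<and> (\<forall>k\<ge>3. summable (\<lambda>n. 1 / \<omega> (k * 2 ^ n)))
          \<and> Top_bounded \<omega>
          \<longrightarrow> chaotic \<omega>)
         \<and> chaotic omega0"
proof
  show "\<forall>\<omega> :: nat \<Rightarrow> real.
            (\<forall>n\<ge>1. \<omega> n > 0)
          \<and> (\<exists>c>0. \<forall>n\<ge>1. c \<le> \<omega> n)
          \<and> (\<forall>k\<ge>3. summable (\<lambda>n. 1 / \<omega> (k * 2 ^ n)))
          \<and> Top_bounded \<omega>
          \<longrightarrow> chaotic \<omega>"
  proof (intro allI impI)
    fix \<omega> :: "nat \<Rightarrow> real"
    assume hyps: "(\<forall>n\<ge>1. \<omega> n > 0) \<and> (\<exists>c>0. \<forall>n\<ge>1. c \<le> \<omega> n)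
      \<and> (\<forall>k\<ge>3. summable (\<lambda>n. 1 / \<omega> (k * 2 ^ n))) \<and> Top_bounded \<omega>"
    then obtain c where "0 < c" and "\<forall>n\<ge>1. c \<le> \<omega> n"
      by blast
    with hyps have "collatz_weight \<omega> c"
      by unfold_locales auto
    then show "chaotic \<omega>"
      by (rule collatz_weight.chaotic_Top)
  qed
  show "chaotic omega0"
    using collatz_weight_omega0 by (rule collatz_weight.chaotic_Top)
qed

end
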